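(* Let $\Gamma$ be a numerical semigroup, $e'\in\Gamma$, and $\Gamma_{e'}=\{0\}\cup(e'+\Gamma)$. For all $m,m'\in\Gamma$, \[ D_{\Gamma_{e'}}(2e'+m,2e'+m')=\big(e'+D_\Gamma(m,m')\big)\cup\{0,2e'+m,2e'+m'\}. \] If in addition $|m-m'|<e'$, this union is disjoint; in particular \[ |D_\Gamma(m,m')|+2\le|D_{\Gamma_{e'}}(2e'+m,2e'+m')|\le|D_\Gamma(m,m')|+3. \]
   Context: A numerical semigroup is a subset of $\mathbb N$ containing $0$, closed under addition, with finite complement. For a numerical semigroup $S$ and $x\in\mathbb Z$, $D_S(x)=\{s\in S:x-s\in S\}$ and $D_S(x_1,x_2)=D_S(x_1)\cup D_S(x_2)$. *)

theory Defs
  imports Main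
begin

definition numerical_semigroup :: "nat set \<Rightarrow> bool" where
  "numerical_semigroup S \<longleftrightarrow> 0 \<in> S \<and> (\<forall>a\<in>S. \<forall>b\<in>S. a + b \<in> S) \<and> finite (UNIV - S)"

text \<open>D_S(x) = {s in S. x - s in S}; for natural x the condition x - s in S (integer subtraction)
  means s \<le> x and the natural difference lies in S.\<close>
definition Dset :: "nat set \<Rightarrow> nat \<Rightarrow> nat set" where
  "Dset S x = {s \<in> S. s \<le> x \<and> x - s \<in> S}"

definition Dset2 :: "nat set \<Rightarrow> nat \<Rightarrow> nat \<Rightarrow> nat set" where
  "Dset2 S x1 x2 = Dset S x1 \<union> Dset S x2"

definition shifted_sg :: "nat set \<Rightarrow> nat \<Rightarrow> nat set" where
  "shifted_sg G e = insert 0 ((\<lambda>s. e + s) ` G)"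

end

theory Submission
  imports Defs
begin

text \<open>Every nonzero element of \<open>\<Gamma>\<^sub>e\<close> has the form \<open>e + s\<close> with \<open>s \<in> \<Gamma>\<close>, so a decomposition
  \<open>2e + k = x + y\<close> in \<open>\<Gamma>\<^sub>e\<close> is either trivial (one summand is \<open>0\<close>) or comes from a
  decomposition \<open>k = s + t\<close> in \<open>\<Gamma>\<close>. When \<open>|m - m'| < e\<close>, every shifted divisor \<open>e + s\<close> satisfies
  \<open>0 < e \<le> e + s \<le> e + max m m' < 2e + min m m'\<close>, so it differs from the three trivial divisors \<open>0, 2e + m, 2e + m'\<close>,
  of which at least two are distinct.\<close>

lemma numerical_semigroup_add:
  "numerical_semigroup S \<Longrightarrow> a \<in> S \<Longrightarrow> b \<in> S \<Longrightarrow> a + b \<in> S"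
  unfolding numerical_semigroup_def by blast

lemma Dset_le: "s \<in> Dset S x \<Longrightarrow> s \<le> x"
  unfolding Dset_def by blast

lemma finite_Dset2: "finite (Dset2 S x y)"
  unfolding Dset2_def Dset_def by (auto intro: finite_subset[of _ "{..x}"] finite_subset[of _ "{..y}"])

lemma Dset_shifted_sg:
  assumes "e + k \<in> G"
  shows "Dset (shifted_sg G e) (2*e + k) = (\<lambda>s. e + s) ` Dset G k \<union> {0, 2*e + k}"
proof (intro set_eqI iffI)
  fix x assume "x \<in> Dset (shifted_sg G e) (2*e + k)"
  then have x: "x \<in> shifted_sg G e" "x \<le> 2*e + k" "2*e + k - x \<in> shifted_sg G e"
    unfolding Dset_def by auto
  show "x \<in> (\<lambda>s. e + s) ` Dset G k \<union> {0, 2*e + k}"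
  proof (cases "x = 0 \<or> x = 2*e + k")
    case False
    then obtain s where s: "s \<in> G" "x = e + s"
      using x(1) unfolding shifted_sg_def by auto
    moreover obtain t where "t \<in> G" "2*e + k - x = e + t"
      using x(2,3) False unfolding shifted_sg_def by auto
    moreover have "s \<le> k" "k - s = t" using s(2) x(2) \<open>2*e + k - x = e + t\<close> by linarith+
    ultimately have "s \<in> Dset G k"
      unfolding Dset_def by auto
    with s show ?thesis by blast
  qed blast
next
  fix x assume x: "x \<in> (\<lambda>s. e + s) ` Dset G k \<union> {0, 2*e + k}"
  have "2*e + k \<in> shifted_sg G e"
    using assms unfolding shifted_sg_def by (auto intro!: image_eqI[where x = "e + k"])
  then have trivial: "0 \<in> Dset (shifted_sg G e) (2*e + k)" "2*e + k \<in> Dset (shifted_sg G e) (2*e + k)"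
    unfolding Dset_def by (auto simp: shifted_sg_def)
  have shifted: "e + s \<in> Dset (shifted_sg G e) (2*e + k)" if "s \<in> Dset G k" for s
  proof -
    have "s \<in> G" "s \<le> k" "k - s \<in> G" using that unfolding Dset_def by auto
    moreover have "2*e + k - (e + s) \<in> (\<lambda>t. e + t) ` G"
      using \<open>s \<le> k\<close> \<open>k - s \<in> G\<close> by (intro image_eqI[where x = "k - s"]) auto
    ultimately show ?thesis unfolding Dset_def shifted_sg_def by auto
  qed
  from x trivial shifted show "x \<in> Dset (shifted_sg G e) (2*e + k)" by blast
qed

lemma Dset2_shifted_sg:
  assumes "e + m \<in> G" and "e + m' \<in> G"
  shows "Dset2 (shifted_sg G e) (2*e + m) (2*e + m')
           = (\<lambda>s. e + s) ` Dset2 G m m' \<union> {0, 2*e + m, 2*e + m'}"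
  unfolding Dset2_def using Dset_shifted_sg[OF assms(1)] Dset_shifted_sg[OF assms(2)] by auto

lemma shifted_Dset2_disjoint_trivial:
  assumes "\<bar>int m - int m'\<bar> < int e"
  shows "(\<lambda>s. e + s) ` Dset2 G m m' \<inter> {0, 2*e + m, 2*e + m'} = {}"
  using assms by (fastforce simp: Dset2_def dest: Dset_le)

lemma card_Dset2_shifted_sg:
  assumes "e + m \<in> G" and "e + m' \<in> G" and "\<bar>int m - int m'\<bar> < int e"
  shows "card (Dset2 (shifted_sg G e) (2*e + m) (2*e + m'))
           = card (Dset2 G m m') + card {0, 2*e + m, 2*e + m'}"
proof -
  have "card ((\<lambda>s. e + s) ` Dset2 G m m') = card (Dset2 G m m')"
    by (simp add: card_image)
  then show ?thesis
    unfolding Dset2_shifted_sg[OF assms(1,2)]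
    using card_Un_disjoint[OF finite_imageI[OF finite_Dset2] _ shifted_Dset2_disjoint_trivial[OF assms(3)]]
    by simp
qed

lemma card_three_with_nonzero:
  fixes a b :: nat
  assumes "a \<noteq> 0"
  shows "2 \<le> card {0, a, b}" and "card {0, a, b} \<le> 3"
proof -
  have "card {0, a} = 2" using assms by simp
  moreover have "card {0, a} \<le> card {0, a, b}" by (rule card_mono) auto
  ultimately show "2 \<le> card {0, a, b}" by simp
  show "card {0, a, b} \<le> 3"
    by (rule order_trans[OF card_insert_le_m1]) (auto simp: card_insert_le_m1)
qed

theorem lemma4p3:
  fixes G :: "nat set" and e m m' :: nat
  assumes "numerical_semigroup G" and "e \<in> G" and "m \<in> G" and "m' \<in> G"
  shows "(Dset2 (shifted_sg G e) (2*e + m) (2*e + m')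
           = ((\<lambda>s. e + s) ` Dset2 G m m') \<union> {0, 2*e + m, 2*e + m'})
         \<and> (\<bar>int m - int m'\<bar> < int e \<longrightarrow>
           (((\<lambda>s. e + s) ` Dset2 G m m') \<inter> {0, 2*e + m, 2*e + m'} = {})
         \<and> card (Dset2 G m m') + 2 \<le> card (Dset2 (shifted_sg G e) (2*e + m) (2*e + m'))
         \<and> card (Dset2 (shifted_sg G e) (2*e + m) (2*e + m')) \<le> card (Dset2 G m m') + 3)"
proof (intro conjI impI)
  have em: "e + m \<in> G" and em': "e + m' \<in> G"
    using assms numerical_semigroup_add by blast+
  then show "Dset2 (shifted_sg G e) (2*e + m) (2*e + m')
               = (\<lambda>s. e + s) ` Dset2 G m m' \<union> {0, 2*e + m, 2*e + m'}"
    by (rule Dset2_shifted_sg)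
  assume close: "\<bar>int m - int m'\<bar> < int e"
  then show "(\<lambda>s. e + s) ` Dset2 G m m' \<inter> {0, 2*e + m, 2*e + m'} = {}"
    by (rule shifted_Dset2_disjoint_trivial)
  have "2*e + m \<noteq> 0" using close by linarith
  with card_Dset2_shifted_sg[OF em em' close] card_three_with_nonzero
  show "card (Dset2 G m m') + 2 \<le> card (Dset2 (shifted_sg G e) (2*e + m) (2*e + m'))"
    and "card (Dset2 (shifted_sg G e) (2*e + m) (2*e + m')) \<le> card (Dset2 G m m') + 3"
    by simp_all
qed

end
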